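(* Let $(X,d)$, $T$, $c$, $l$, $\alpha$ and $\rho$ be as follows: $(X,d)$ is a compact metric space, $T:\mathbb{Z}^k\times X\to X$ a continuous action, $c>0$ such that distinct $x,y$ satisfy $\sup_{u\in\mathbb{Z}^k}d(T^ux,T^uy)>c$, $l>0$ an integer such that $d(x,y)\geq c/2$ implies $d(T^ux,T^uy)\geq c$ for some $|u|\leq l$, $\alpha>1$ with $\alpha^l<2$, $\mathbf{n}(x,y)=\min\{n\geq0:\exists u\in\mathbb{Z}^k,|u|\leq n, d(T^ux,T^uy)\geq c\}$ ($=\infty$ if $x=y$), $\rho(x,y)=\alpha^{-\mathbf{n}(x,y)}$. Let $D$ be a distance function on $X$ with $\rho(x,y)/4\leq D(x,y)\leq\rho(x,y)$ for all $x,y$. If $n\geq1$ and $x,y\in X$ satisfy $\max_{u\in\mathbb{Z}^k,|u|<n}D(T^ux,T^uy)<1/(4\alpha)$, then $D(x,y)<\alpha^{-n}$.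
   Context: $|u|$ denotes the norm of $u\in\mathbb{Z}^k$ (a fixed norm, e.g. Euclidean). *)

theory Defs
  imports "HOL-Analysis.Analysis" "HOL-Library.Extended_Nat"
begin

text \<open>Lattice points of Z^k are modelled as functions 'k \<Rightarrow> int over a finite
  index type 'k (k = CARD('k)); the norm is the Euclidean norm.\<close>

definition znorm :: "('k::finite \<Rightarrow> int) \<Rightarrow> real" where
  "znorm u = sqrt (\<Sum>i\<in>UNIV. (real_of_int (u i))\<^sup>2)"

definition is_cont_Zk_action :: "(('k::finite \<Rightarrow> int) \<Rightarrow> 'a::metric_space \<Rightarrow> 'a) \<Rightarrow> bool" where
  "is_cont_Zk_action T \<longleftrightarrow>
     (\<forall>x. T (\<lambda>_. 0) x = x) \<and>
     (\<forall>u v x. T (\<lambda>i. u i + v i) x = T u (T v x)) \<and>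
     (\<forall>u. continuous_on UNIV (T u))"

definition sepn :: "(('k::finite \<Rightarrow> int) \<Rightarrow> 'a::metric_space \<Rightarrow> 'a) \<Rightarrow> real \<Rightarrow> 'a \<Rightarrow> 'a \<Rightarrow> enat" where
  "sepn T c x y =
     (if \<exists>n::nat. \<exists>u. znorm u \<le> real n \<and> dist (T u x) (T u y) \<ge> c
      then enat (LEAST n::nat. \<exists>u. znorm u \<le> real n \<and> dist (T u x) (T u y) \<ge> c)
      else \<infinity>)"

definition rho :: "(('k::finite \<Rightarrow> int) \<Rightarrow> 'a::metric_space \<Rightarrow> 'a) \<Rightarrow> real \<Rightarrow> real \<Rightarrow> 'a \<Rightarrow> 'a \<Rightarrow> real" where
  "rho T c \<alpha> x y = (case sepn T c x y of enat n \<Rightarrow> inverse (\<alpha> ^ n) | \<infinity> \<Rightarrow> 0)"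

end

theory Submission
  imports Defs
begin

text \<open>Every lattice point of norm at most n is a unit step away from a lattice point of
  norm less than n. If D(T^u x, T^u y) < 1/(4\<alpha>) then \<rho>(T^u x, T^u y) < 1/\<alpha>, i.e. no
  displacement of norm at most 1 separates T^u x from T^u y by c. Hence no displacement of
  norm at most n separates x from y, so n(x,y) > n and D(x,y) \<le> \<rho>(x,y) < \<alpha>^(-n).\<close>

lemma less_sepn_iff:
  "enat m < sepn T c x y \<longleftrightarrow> (\<forall>u. znorm u \<le> real m \<longrightarrow> dist (T u x) (T u y) < c)"
    (is "_ \<longleftrightarrow> ?unseparated")
proof -
  let ?P = "\<lambda>n::nat. \<exists>u. znorm u \<le> real n \<and> dist (T u x) (T u y) \<ge> c"
  have unseparated_iff: "?unseparated \<longleftrightarrow> \<not> ?P m"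
    by (meson not_le)
  have P_mono: "?P j" if "?P k" and "k \<le> j" for j k
    using that order_trans[OF _ of_nat_mono[OF \<open>k \<le> j\<close>]] by blast
  show ?thesis
  proof (cases "\<exists>n. ?P n")
    case True
    have "m < (LEAST n. ?P n) \<longleftrightarrow> \<not> ?P m"
    proof
      show "m < (LEAST n. ?P n) \<Longrightarrow> \<not> ?P m" by (rule not_less_Least)
      show "\<not> ?P m \<Longrightarrow> m < (LEAST n. ?P n)"
        using P_mono[OF LeastI_ex[OF True], of m] not_le by blast
    qed
    moreover have "sepn T c x y = enat (LEAST n. ?P n)" using True by (simp add: sepn_def)
    ultimately show ?thesis using unseparated_iff by simp
  next
    case False
    then have "sepn T c x y = \<infinity>" by (simp add: sepn_def)
    then show ?thesis using unseparated_iff False by simp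
  qed
qed

lemma rho_less_inverse_power_iff:
  assumes "\<alpha> > 1"
  shows "rho T c \<alpha> x y < inverse (\<alpha> ^ m) \<longleftrightarrow> enat m < sepn T c x y"
proof (cases "sepn T c x y")
  case (enat k)
  have "inverse (\<alpha> ^ k) < inverse (\<alpha> ^ m) \<longleftrightarrow> \<alpha> ^ m < \<alpha> ^ k"
    using assms by (simp add: inverse_less_iff_less)
  also have "\<dots> \<longleftrightarrow> m < k" using assms by simp
  finally show ?thesis by (simp add: rho_def enat)
next
  case infinity
  then show ?thesis using assms by (simp add: rho_def)
qed

lemma D_small_imp_not_separated:
  assumes D_rho: "\<forall>x y. rho T c \<alpha> x y / 4 \<le> D x y"
    and "\<alpha> > 1" and "D p q < 1 / (4 * \<alpha>)" and "znorm w \<le> 1"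
  shows "dist (T w p) (T w q) < c"
proof -
  have "rho T c \<alpha> p q \<le> 4 * D p q" using D_rho[rule_format, of p q] by linarith
  also have "\<dots> < inverse (\<alpha> ^ 1)"
    using \<open>D p q < 1 / (4 * \<alpha>)\<close> \<open>\<alpha> > 1\<close> by (simp add: field_simps)
  finally have "rho T c \<alpha> p q < inverse (\<alpha> ^ 1)" .
  then have "enat 1 < sepn T c p q"
    using rho_less_inverse_power_iff[OF \<open>\<alpha> > 1\<close>] by blast
  then show ?thesis using \<open>znorm w \<le> 1\<close> by (simp add: less_sepn_iff)
qed

lemma znorm_zero: "znorm (\<lambda>_. 0) = 0"
  by (simp add: znorm_def)

lemma znorm_unit_vector:
  assumes "\<bar>s\<bar> = 1"
  shows "znorm (\<lambda>j. if j = i then s else 0) = 1"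
proof -
  have "(\<Sum>j\<in>UNIV. (real_of_int (if j = i then s else 0))\<^sup>2)
      = (\<Sum>j\<in>UNIV. if j = i then (real_of_int s)\<^sup>2 else 0)"
    by (rule sum.cong) auto
  also have "\<dots> = 1" using assms by (cases "s \<ge> 0") auto
  finally show ?thesis by (simp add: znorm_def)
qed

lemma znorm_step_towards_zero:
  fixes v :: "'k::finite \<Rightarrow> int"
  assumes "v i \<noteq> 0"
  shows "znorm (\<lambda>j. v j - (if j = i then sgn (v i) else 0)) < znorm v"
proof -
  have "(v i - sgn (v i))\<^sup>2 < (v i)\<^sup>2"
    using assms by (cases "v i > 0") (auto simp: power2_eq_square sgn_if algebra_simps)
  then have coord: "(real_of_int (v i - sgn (v i)))\<^sup>2 < (real_of_int (v i))\<^sup>2"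
    by (metis of_int_less_iff of_int_power)
  have "(\<Sum>j\<in>UNIV. (real_of_int (v j - (if j = i then sgn (v i) else 0)))\<^sup>2)
      < (\<Sum>j\<in>UNIV. (real_of_int (v j))\<^sup>2)"
  proof (rule sum_strict_mono_ex1)
    show "\<forall>j\<in>UNIV. (real_of_int (v j - (if j = i then sgn (v i) else 0)))\<^sup>2
        \<le> (real_of_int (v j))\<^sup>2"
      using coord by (auto split: if_split)
    show "\<exists>j\<in>UNIV. (real_of_int (v j - (if j = i then sgn (v i) else 0)))\<^sup>2
        < (real_of_int (v j))\<^sup>2"
      using coord by (intro bexI[of _ i]) auto
  qed simp
  then show ?thesis unfolding znorm_def by simp
qed

lemma lattice_point_unit_step:
  fixes v :: "'k::finite \<Rightarrow> int"
  assumes "znorm v \<le> r" and "r > 0"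
  obtains w u where "v = (\<lambda>j. w j + u j)" and "znorm w \<le> 1" and "znorm u < r"
proof (cases "\<exists>i. v i \<noteq> 0")
  case True
  then obtain i where "v i \<noteq> 0" by blast
  let ?w = "\<lambda>j. if j = i then sgn (v i) else 0"
  have "znorm ?w = 1"
    using \<open>v i \<noteq> 0\<close> by (intro znorm_unit_vector) (simp add: abs_sgn_eq)
  moreover have "znorm (\<lambda>j. v j - ?w j) < r"
    using znorm_step_towards_zero[of v i] \<open>v i \<noteq> 0\<close> assms(1) by linarith
  ultimately show ?thesis by (intro that[of ?w "\<lambda>j. v j - ?w j"]) auto
next
  case False
  then have "v = (\<lambda>j. 0 + 0)" by auto
  then show ?thesis using \<open>r > 0\<close> by (intro that[of "\<lambda>_. 0" "\<lambda>_. 0"]) (auto simp: znorm_zero)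
qed

theorem lemma4p4:
  fixes T :: "('k::finite \<Rightarrow> int) \<Rightarrow> 'a::metric_space \<Rightarrow> 'a"
    and c \<alpha> :: real and l n :: nat and D :: "'a \<Rightarrow> 'a \<Rightarrow> real" and x y :: 'a
  assumes "compact (UNIV :: 'a set)"
    and "is_cont_Zk_action T"
    and "c > 0"
    and "\<forall>x y. x \<noteq> y \<longrightarrow> (SUP u. dist (T u x) (T u y)) > c"
    and "l > 0"
    and "\<forall>x y. dist x y \<ge> c / 2 \<longrightarrow> (\<exists>u. znorm u \<le> real l \<and> dist (T u x) (T u y) \<ge> c)"
    and "\<alpha> > 1" and "\<alpha> ^ l < 2"
    and "\<forall>x y. D x y = 0 \<longleftrightarrow> x = y"
    and "\<forall>x y. D x y = D y x"
    and "\<forall>x y z. D x z \<le> D x y + D y z"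
    and "\<forall>x y. rho T c \<alpha> x y / 4 \<le> D x y \<and> D x y \<le> rho T c \<alpha> x y"
    and "n \<ge> 1"
    and "\<forall>u. znorm u < real n \<longrightarrow> D (T u x) (T u y) < 1 / (4 * \<alpha>)"
  shows "D x y < inverse (\<alpha> ^ n)"
proof -
  have compose: "T (\<lambda>j. w j + u j) z = T w (T u z)" for w u z
    using assms(2) by (simp add: is_cont_Zk_action_def)
  have "dist (T v x) (T v y) < c" if "znorm v \<le> real n" for v
  proof -
    obtain w u where v: "v = (\<lambda>j. w j + u j)" and "znorm w \<le> 1" and "znorm u < real n"
      using lattice_point_unit_step[OF \<open>znorm v \<le> real n\<close>] assms(13) by auto
    have "dist (T w (T u x)) (T w (T u y)) < c"
      using assms(12,7,14) \<open>znorm u < real n\<close> \<open>znorm w \<le> 1\<close>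
      by (intro D_small_imp_not_separated[where D = D]) auto
    then show ?thesis by (simp add: v compose)
  qed
  then have "rho T c \<alpha> x y < inverse (\<alpha> ^ n)"
    by (simp add: rho_less_inverse_power_iff[OF assms(7)] less_sepn_iff)
  then show ?thesis using assms(12) by (meson le_less_trans)
qed

end
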